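(* Let $G$ be a group with Property RD with respect to a length function $l$, and let $g_1\in G$ be a torsion element of order $d>1$ such that for every $t$ with $0<t<d$ the conjugacy class $C(g_1^t)$ does not grow polynomially (for every polynomial $P$ there are infinitely many $m$ with $|\{g\in C(g_1^t):l(g)=m\}|>P(m)$). Let $p_1=\frac1d(1+g_1+\dots+g_1^{d-1})$. Then every bounded trace $\tau$ on $C^*_{\mathrm{red}}G$ satisfies $\tau(p_1)=\frac1d\tau(1)$; in particular, $[1]$ and $[p_1]$ cannot be distinguished by traces on $C^*_{\mathrm{red}}G$, i.e. for any two bounded traces $\tau_0,\tau_1$ on $C^*_{\mathrm{red}}G$ the matrix $\begin{pmatrix}\tau_0(1)&\tau_0(p_1)\\ \tau_1(1)&\tau_1(p_1)\end{pmatrix}$ has determinant $0$.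
   Context: A length function on $G$ is $l:G\to\mathbb{Z}_{\ge0}$ with $l(fg)\le l(f)+l(g)$, $l(g^{-1})=l(g)$, $l(e)=0$, and $l^{-1}(S)$ finite for finite $S$. $\|\sum c_g g\|_{H^s}^2=\sum|c_g|^2(1+l(g))^{2s}$. $G$ has Property RD with respect to $l$ if there are constants $C,s$ with $\|x\|_{C^*_{\mathrm{red}}G}\le C\|x\|_{H^s}$ for all $x\in\mathbb{C}G$. $C(g)$ is the conjugacy class of $g$. A trace is a bounded linear functional $\tau$ with $\tau(ab)=\tau(ba)$. *)

theory Defs
  imports Complex_Main "HOL-Algebra.Multiplicative_Group" "HOL-Computational_Algebra.Polynomial"
begin

definition length_function :: "('a, 'b) monoid_scheme \<Rightarrow> ('a \<Rightarrow> nat) \<Rightarrow> bool" where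
  "length_function G l \<longleftrightarrow>
     (\<forall>f\<in>carrier G. \<forall>g\<in>carrier G. l (f \<otimes>\<^bsub>G\<^esub> g) \<le> l f + l g) \<and>
     (\<forall>g\<in>carrier G. l (inv\<^bsub>G\<^esub> g) = l g) \<and>
     l \<one>\<^bsub>G\<^esub> = 0 \<and>
     (\<forall>S::nat set. finite S \<longrightarrow> finite {g \<in> carrier G. l g \<in> S})"

definition supp :: "('a \<Rightarrow> complex) \<Rightarrow> 'a set" where
  "supp x = {g. x g \<noteq> 0}"

definition group_ring :: "('a, 'b) monoid_scheme \<Rightarrow> ('a \<Rightarrow> complex) set" where
  "group_ring G = {x. finite (supp x) \<and> supp x \<subseteq> carrier G}"

definition delta :: "'a \<Rightarrow> 'a \<Rightarrow> complex" where
  "delta h = (\<lambda>g. if g = h then 1 else 0)"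

(* Convolution product in CG (also the left regular representation on finitely
   supported functions in l^2 G):  (x*y)(g) = sum_h x(h) y(h^{-1} g). *)
definition conv :: "('a, 'b) monoid_scheme \<Rightarrow> ('a \<Rightarrow> complex) \<Rightarrow> ('a \<Rightarrow> complex) \<Rightarrow> 'a \<Rightarrow> complex" where
  "conv G x y = (\<lambda>g. if g \<in> carrier G
       then (\<Sum>h\<in>supp x. x h * y (inv\<^bsub>G\<^esub> h \<otimes>\<^bsub>G\<^esub> g)) else 0)"

definition l2_norm_fs :: "('a \<Rightarrow> complex) \<Rightarrow> real" where
  "l2_norm_fs f = sqrt (\<Sum>g\<in>supp f. (cmod (f g))\<^sup>2)"

definition hs_norm :: "('a \<Rightarrow> nat) \<Rightarrow> real \<Rightarrow> ('a \<Rightarrow> complex) \<Rightarrow> real" where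
  "hs_norm l s x = sqrt (\<Sum>g\<in>supp x. (cmod (x g))\<^sup>2 * (1 + real (l g)) powr (2 * s))"

(* Reduced C*-norm: operator norm of left convolution by x on l^2(G),
   computed on the dense subspace of finitely supported functions. *)
definition red_norm :: "('a, 'b) monoid_scheme \<Rightarrow> ('a \<Rightarrow> complex) \<Rightarrow> real" where
  "red_norm G x = (SUP f \<in> {f \<in> group_ring G. l2_norm_fs f \<le> 1}. l2_norm_fs (conv G x f))"

definition property_RD :: "('a, 'b) monoid_scheme \<Rightarrow> ('a \<Rightarrow> nat) \<Rightarrow> bool" where
  "property_RD G l \<longleftrightarrow> (\<exists>C s. \<forall>x\<in>group_ring G. red_norm G x \<le> C * hs_norm l s x)"

(* A bounded trace on C*_red G, described through its (unique, determining)
   restriction to the dense subalgebra CG: linear, bounded w.r.t. the reduced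
   norm, and tracial. *)
definition bounded_trace :: "('a, 'b) monoid_scheme \<Rightarrow> (('a \<Rightarrow> complex) \<Rightarrow> complex) \<Rightarrow> bool" where
  "bounded_trace G \<tau> \<longleftrightarrow>
     (\<forall>x\<in>group_ring G. \<forall>y\<in>group_ring G. \<tau> (\<lambda>g. x g + y g) = \<tau> x + \<tau> y) \<and>
     (\<forall>x\<in>group_ring G. \<forall>c. \<tau> (\<lambda>g. c * x g) = c * \<tau> x) \<and>
     (\<exists>K. \<forall>x\<in>group_ring G. cmod (\<tau> x) \<le> K * red_norm G x) \<and>
     (\<forall>x\<in>group_ring G. \<forall>y\<in>group_ring G. \<tau> (conv G x y) = \<tau> (conv G y x))"

definition conj_class :: "('a, 'b) monoid_scheme \<Rightarrow> 'a \<Rightarrow> 'a set" where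
  "conj_class G h = {g \<otimes>\<^bsub>G\<^esub> h \<otimes>\<^bsub>G\<^esub> inv\<^bsub>G\<^esub> g | g. g \<in> carrier G}"

definition not_poly_growth :: "('a, 'b) monoid_scheme \<Rightarrow> ('a \<Rightarrow> nat) \<Rightarrow> 'a \<Rightarrow> bool" where
  "not_poly_growth G l h \<longleftrightarrow>
     (\<forall>P :: real poly. infinite {m::nat. real (card {g \<in> conj_class G h. l g = m}) > poly P (real m)})"

end

theory Submission imports Defs begin

text \<open>A bounded trace is constant on conjugacy classes, and by Property RD it is dominated by
  an \<open>H\<^sup>s\<close>-norm. Evaluating it on the sum of the \<open>N\<^sub>m\<close> elements of length \<open>m\<close> in the conjugacy
  class of \<open>h\<close> gives \<open>N\<^sub>m |\<tau>(h)| \<le> B \<surd>N\<^sub>m (1 + m)\<^sup>s\<close>, so \<open>\<tau>(h) \<noteq> 0\<close> forces \<open>N\<^sub>m\<close> to be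
  polynomially bounded. Hence \<open>\<tau>\<close> vanishes on the nontrivial powers of \<open>g\<^sub>1\<close>, and
  \<open>\<tau>(p\<^sub>1) = \<tau>(1)/d\<close>.\<close>

lemma supp_delta [simp]: "supp (delta a) = {a}"
  by (auto simp: supp_def delta_def)

lemma delta_in_group_ring: "a \<in> carrier G \<Longrightarrow> delta a \<in> group_ring G"
  by (simp add: group_ring_def)

lemma sum_delta_eq: "finite A \<Longrightarrow> (\<lambda>g. \<Sum>k\<in>A. delta k g) = (\<lambda>g. if g \<in> A then 1 else 0)"
  by (rule ext) (simp add: delta_def sum.delta')

lemma group_ring_sum:
  assumes "finite I" "\<And>i. i \<in> I \<Longrightarrow> f i \<in> group_ring G"
  shows "(\<lambda>g. \<Sum>i\<in>I. f i g) \<in> group_ring G"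
proof -
  have sub: "supp (\<lambda>g. \<Sum>i\<in>I. f i g) \<subseteq> (\<Union>i\<in>I. supp (f i))"
    by (auto simp: supp_def intro: ccontr)
  moreover have "finite (\<Union>i\<in>I. supp (f i))" "(\<Union>i\<in>I. supp (f i)) \<subseteq> carrier G"
    using assms by (auto simp: group_ring_def)
  ultimately show ?thesis
    unfolding group_ring_def by (auto intro: finite_subset)
qed

lemma conj_class_subset_carrier:
  "group G \<Longrightarrow> h \<in> carrier G \<Longrightarrow> conj_class G h \<subseteq> carrier G"
  by (auto simp: conj_class_def group.subgroup_self subgroup.m_inv_closed
      intro!: monoid.m_closed group.is_monoid)

lemma conv_delta_delta:
  fixes G (structure)
  assumes "group G" "a \<in> carrier G" "b \<in> carrier G"
  shows "conv G (delta a) (delta b) = delta (a \<otimes>\<^bsub>G\<^esub> b)"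
proof
  fix g
  interpret group G by fact
  have "g \<in> carrier G \<Longrightarrow> inv a \<otimes> g = b \<longleftrightarrow> g = a \<otimes> b"
    using assms by (metis inv_solve_left)
  then show "conv G (delta a) (delta b) g = delta (a \<otimes> b) g"
    unfolding conv_def supp_delta using assms by (auto simp: delta_def)
qed

lemma conv_delta_one:
  fixes G (structure)
  assumes "group G" "f \<in> group_ring G"
  shows "conv G (delta \<one>\<^bsub>G\<^esub>) f = f"
proof
  fix g
  interpret group G by fact
  have "g \<notin> carrier G \<Longrightarrow> f g = 0"
    using assms(2) by (auto simp: group_ring_def supp_def)
  then show "conv G (delta \<one>) f g = f g"
    unfolding conv_def supp_delta by (auto simp: delta_def)
qed

lemma red_norm_delta_one:
  assumes "group G"
  shows "1 \<le> red_norm G (delta \<one>\<^bsub>G\<^esub>)"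
proof -
  let ?B = "{f \<in> group_ring G. l2_norm_fs f \<le> 1}"
  have l2_delta: "l2_norm_fs (delta a) = 1" for a :: 'a
    unfolding l2_norm_fs_def supp_delta by (simp add: delta_def)
  have unit: "l2_norm_fs (conv G (delta \<one>\<^bsub>G\<^esub>) f) = l2_norm_fs f" if "f \<in> ?B" for f
    using that conv_delta_one[OF assms] by simp
  have one_in: "delta \<one>\<^bsub>G\<^esub> \<in> ?B"
    using assms by (simp add: delta_in_group_ring group.is_monoid monoid.one_closed l2_delta)
  have "bdd_above ((\<lambda>f. l2_norm_fs (conv G (delta \<one>\<^bsub>G\<^esub>) f)) ` ?B)"
    by (rule bdd_aboveI[where M = 1]) (auto simp: unit)
  from cSUP_upper[OF one_in this] show ?thesis
    unfolding red_norm_def using unit[OF one_in] by (simp add: l2_delta)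
qed

context
  fixes G :: "('a, 'b) monoid_scheme" and \<tau> :: "('a \<Rightarrow> complex) \<Rightarrow> complex"
  assumes trace: "bounded_trace G \<tau>"
begin

lemma bounded_trace_add:
  "x \<in> group_ring G \<Longrightarrow> y \<in> group_ring G \<Longrightarrow> \<tau> (\<lambda>g. x g + y g) = \<tau> x + \<tau> y"
  using trace by (simp add: bounded_trace_def)

lemma bounded_trace_scale: "x \<in> group_ring G \<Longrightarrow> \<tau> (\<lambda>g. c * x g) = c * \<tau> x"
  using trace by (simp add: bounded_trace_def)

lemma bounded_trace_commute:
  "x \<in> group_ring G \<Longrightarrow> y \<in> group_ring G \<Longrightarrow> \<tau> (conv G x y) = \<tau> (conv G y x)"
  using trace by (simp add: bounded_trace_def)

lemma bounded_trace_sum: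
  assumes "finite I" "\<And>i. i \<in> I \<Longrightarrow> f i \<in> group_ring G"
  shows "\<tau> (\<lambda>g. \<Sum>i\<in>I. f i g) = (\<Sum>i\<in>I. \<tau> (f i))"
  using assms
proof (induction I rule: finite_induct)
  case empty
  have "(\<lambda>g. 0) \<in> group_ring G"
    by (simp add: group_ring_def supp_def)
  from bounded_trace_scale[OF this, of 0] show ?case by simp
next
  case (insert i I)
  then show ?case
    by (simp add: bounded_trace_add group_ring_sum)
qed

lemma bounded_trace_conj:
  assumes "group G" "g \<in> carrier G" "h \<in> carrier G"
  shows "\<tau> (delta (g \<otimes>\<^bsub>G\<^esub> h \<otimes>\<^bsub>G\<^esub> inv\<^bsub>G\<^esub> g)) = \<tau> (delta h)"
proof -
  interpret group G by fact
  let ?h' = "h \<otimes>\<^bsub>G\<^esub> inv\<^bsub>G\<^esub> g"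
  have "\<tau> (delta (g \<otimes>\<^bsub>G\<^esub> h \<otimes>\<^bsub>G\<^esub> inv\<^bsub>G\<^esub> g)) = \<tau> (conv G (delta g) (delta ?h'))"
    using assms by (simp add: conv_delta_delta m_assoc)
  also have "\<dots> = \<tau> (conv G (delta ?h') (delta g))"
    using assms by (simp add: bounded_trace_commute delta_in_group_ring)
  also have "\<dots> = \<tau> (delta h)"
    using assms by (simp add: conv_delta_delta m_assoc)
  finally show ?thesis .
qed

lemma bounded_trace_sum_conj_class:
  assumes "group G" "h \<in> carrier G" "finite A" "A \<subseteq> conj_class G h"
  shows "\<tau> (\<lambda>g. \<Sum>k\<in>A. delta k g) = of_nat (card A) * \<tau> (delta h)"
proof -
  have "\<tau> (delta k) = \<tau> (delta h) \<and> delta k \<in> group_ring G" if k: "k \<in> A" for k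
  proof -
    obtain g where "g \<in> carrier G" "k = g \<otimes>\<^bsub>G\<^esub> h \<otimes>\<^bsub>G\<^esub> inv\<^bsub>G\<^esub> g"
      using k assms(4) by (auto simp: conj_class_def)
    moreover have "k \<in> carrier G"
      using k assms(4) conj_class_subset_carrier[OF assms(1,2)] by blast
    ultimately show ?thesis
      using bounded_trace_conj[OF assms(1) _ assms(2)] by (simp add: delta_in_group_ring)
  qed
  then show ?thesis
    using assms(3) by (simp add: bounded_trace_sum)
qed

lemma property_RD_bounded_trace:
  assumes "group G" "property_RD G l"
  obtains B s where "\<And>x. x \<in> group_ring G \<Longrightarrow> cmod (\<tau> x) \<le> B * hs_norm l s x"
proof -
  obtain C s where C: "\<And>x. x \<in> group_ring G \<Longrightarrow> red_norm G x \<le> C * hs_norm l s x"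
    using assms(2) by (auto simp: property_RD_def)
  obtain K where K: "\<And>x. x \<in> group_ring G \<Longrightarrow> cmod (\<tau> x) \<le> K * red_norm G x"
    using trace unfolding bounded_trace_def by blast
  have "0 \<le> K * red_norm G (delta \<one>\<^bsub>G\<^esub>)"
    using K[of "delta \<one>\<^bsub>G\<^esub>"] assms(1) norm_ge_zero
    by (meson delta_in_group_ring group.is_monoid monoid.one_closed order_trans)
  with red_norm_delta_one[OF assms(1)] have "0 \<le> K"
    by (auto simp: zero_le_mult_iff)
  then have "cmod (\<tau> x) \<le> (K * C) * hs_norm l s x" if "x \<in> group_ring G" for x
    using K[OF that] C[OF that] by (metis mult.assoc mult_left_mono order_trans)
  then show thesis by (rule that)
qed

end

lemma hs_norm_sum_delta_sphere:
  assumes "finite A" "\<And>g. g \<in> A \<Longrightarrow> l g = m"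
  shows "hs_norm l s (\<lambda>g. \<Sum>k\<in>A. delta k g) = sqrt (real (card A) * (1 + real m) powr (2 * s))"
proof -
  have "supp (\<lambda>g. \<Sum>k\<in>A. delta k g) = A"
    by (simp add: sum_delta_eq[OF assms(1)] supp_def)
  then show ?thesis
    using assms by (simp add: hs_norm_def sum_delta_eq)
qed

lemma le_of_mult_le_mult_sqrt:
  fixes N t B a :: real
  assumes "N * t \<le> B * sqrt (N * a)" "0 < t" "0 \<le> N" "0 \<le> a"
  shows "N \<le> B\<^sup>2 / t\<^sup>2 * a"
proof (cases "N = 0")
  case False
  have "(N * t)\<^sup>2 \<le> (B * sqrt (N * a))\<^sup>2"
    using assms by (intro power_mono) auto
  then have "N * (N * t\<^sup>2) \<le> N * (B\<^sup>2 * a)"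
    using assms by (simp add: power_mult_distrib power2_eq_square mult_ac)
  then have "N * t\<^sup>2 \<le> B\<^sup>2 * a"
    using False assms(3) by simp
  then show ?thesis
    using assms(2) by (simp add: field_simps)
qed (use assms in simp)

lemma conj_class_sphere_polynomial_bound:
  assumes "group G" "length_function G l" "property_RD G l" "bounded_trace G \<tau>"
    and "h \<in> carrier G" "\<tau> (delta h) \<noteq> 0"
  obtains P :: "real poly" where
    "\<And>m. real (card {g \<in> conj_class G h. l g = m}) \<le> poly P (real m)"
proof -
  obtain B s where B: "\<And>x. x \<in> group_ring G \<Longrightarrow> cmod (\<tau> x) \<le> B * hs_norm l s x"
    using property_RD_bounded_trace[OF assms(4,1,3)] by blast
  define t where "t = cmod (\<tau> (delta h))"
  define n where "n = nat \<lceil>2 * s\<rceil>"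
  define P where "P = smult (B\<^sup>2 / t\<^sup>2) ([:1, 1:] ^ n)"
  have "t > 0"
    using assms(6) by (simp add: t_def)
  have "real (card S) \<le> poly P (real m)" if S: "S = {g \<in> conj_class G h. l g = m}" for S m
  proof -
    have S_carrier: "S \<subseteq> {g \<in> carrier G. l g \<in> {m}}"
      using S conj_class_subset_carrier[OF assms(1,5)] by auto
    moreover have "finite {g \<in> carrier G. l g \<in> {m}}"
      using assms(2) unfolding length_function_def by blast
    ultimately have "finite S"
      by (rule finite_subset)
    let ?x = "\<lambda>g. \<Sum>k\<in>S. delta k g"
    have "?x \<in> group_ring G"
      using \<open>finite S\<close> S_carrier by (auto intro: group_ring_sum delta_in_group_ring)
    then have "cmod (of_nat (card S) * \<tau> (delta h)) \<le> B * hs_norm l s ?x"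
      using B bounded_trace_sum_conj_class[OF assms(4,1,5) \<open>finite S\<close>] S by force
    then have "real (card S) * t \<le> B * sqrt (real (card S) * (1 + real m) powr (2 * s))"
      using hs_norm_sum_delta_sphere[OF \<open>finite S\<close>, of l m s] S
      by (simp add: t_def norm_mult)
    from le_of_mult_le_mult_sqrt[OF this \<open>t > 0\<close>]
    have "real (card S) \<le> B\<^sup>2 / t\<^sup>2 * (1 + real m) powr (2 * s)"
      by simp
    also have "\<dots> \<le> B\<^sup>2 / t\<^sup>2 * (1 + real m) powr n"
      by (intro mult_left_mono powr_mono) (auto simp: n_def real_nat_ceiling_ge)
    also have "\<dots> = poly P (real m)"
      by (simp add: P_def poly_power powr_realpow add.commute)
    finally show ?thesis .
  qed
  then show thesis
    using that by blast
qed

lemma bounded_trace_vanishes_if_not_poly_growth: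
  assumes "group G" "length_function G l" "property_RD G l" "bounded_trace G \<tau>"
    and "h \<in> carrier G" "not_poly_growth G l h"
  shows "\<tau> (delta h) = 0"
proof (rule ccontr)
  assume "\<tau> (delta h) \<noteq> 0"
  then obtain P :: "real poly" where
    "\<And>m. real (card {g \<in> conj_class G h. l g = m}) \<le> poly P (real m)"
    using conj_class_sphere_polynomial_bound[OF assms(1-5)] by blast
  then have "{m. real (card {g \<in> conj_class G h. l g = m}) > poly P (real m)} = {}"
    by (simp add: not_less)
  with assms(6) show False
    unfolding not_poly_growth_def by (metis finite.emptyI)
qed

theorem mainTheorem6:
  fixes G :: "('a, 'b) monoid_scheme" and l :: "'a \<Rightarrow> nat" and g1 :: 'a and d :: nat
  assumes "group G"
    and "length_function G l"
    and "property_RD G l"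
    and "g1 \<in> carrier G"
    and "group.ord G g1 = d" and "d > 1"
    and "\<forall>t. 0 < t \<and> t < d \<longrightarrow> not_poly_growth G l (g1 [^]\<^bsub>G\<^esub> t)"
  defines "p1 \<equiv> (\<lambda>g. (1 / of_nat d) * (\<Sum>t<d. delta (g1 [^]\<^bsub>G\<^esub> t) g))"
  shows "(\<forall>\<tau>. bounded_trace G \<tau> \<longrightarrow> \<tau> p1 = \<tau> (delta \<one>\<^bsub>G\<^esub>) / of_nat d) \<and>
         (\<forall>\<tau>0 \<tau>1. bounded_trace G \<tau>0 \<and> bounded_trace G \<tau>1 \<longrightarrow>
            \<tau>0 (delta \<one>\<^bsub>G\<^esub>) * \<tau>1 p1 - \<tau>0 p1 * \<tau>1 (delta \<one>\<^bsub>G\<^esub>) = 0)"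
proof -
  have trace_p1: "\<tau> p1 = \<tau> (delta \<one>\<^bsub>G\<^esub>) / of_nat d" if "bounded_trace G \<tau>" for \<tau>
  proof -
    have powers: "delta (g1 [^]\<^bsub>G\<^esub> t) \<in> group_ring G" for t :: nat
      using assms(1,4) by (simp add: delta_in_group_ring group.is_monoid monoid.nat_pow_closed)
    have "\<tau> (delta (g1 [^]\<^bsub>G\<^esub> t)) = 0" if "t \<in> {1..<d}" for t
      using that assms(1-4,7) \<open>bounded_trace G \<tau>\<close>
      by (auto intro!: bounded_trace_vanishes_if_not_poly_growth
          simp: group.is_monoid monoid.nat_pow_closed)
    then have "(\<Sum>t<d. \<tau> (delta (g1 [^]\<^bsub>G\<^esub> t))) = \<tau> (delta \<one>\<^bsub>G\<^esub>)"
      using assms(6) by (simp add: lessThan_atLeast0 sum.atLeast_Suc_lessThan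
          sum.neutral flip: One_nat_def)
    moreover have "\<tau> p1 = 1 / of_nat d * (\<Sum>t<d. \<tau> (delta (g1 [^]\<^bsub>G\<^esub> t)))"
      unfolding p1_def
      using bounded_trace_scale[OF \<open>bounded_trace G \<tau>\<close> group_ring_sum[OF finite_lessThan powers]]
        bounded_trace_sum[OF \<open>bounded_trace G \<tau>\<close> finite_lessThan powers]
      by (simp only:)
    ultimately show ?thesis
      by simp
  qed
  show ?thesis
  proof (intro conjI allI impI)
    fix \<tau>0 \<tau>1
    assume "bounded_trace G \<tau>0 \<and> bounded_trace G \<tau>1"
    then show "\<tau>0 (delta \<one>\<^bsub>G\<^esub>) * \<tau>1 p1 - \<tau>0 p1 * \<tau>1 (delta \<one>\<^bsub>G\<^esub>) = 0"
      using trace_p1[of \<tau>0] trace_p1[of \<tau>1] by simp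
  qed (fact trace_p1)
qed

end
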